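(* Let $G$ be a finite simple graph on $n\geq 2$ vertices. Then $\mathrm{nRel}(G;p)$ is concave down for $p$ sufficiently close to $0$; that is, there is $\varepsilon>0$ such that $\frac{d^2}{dp^2}\mathrm{nRel}(G;p)<0$ for all $p\in(0,\varepsilon)$.
   Context: For a graph $G$ on $n$ vertices, a connected set is a nonempty vertex subset $C$ such that the induced subgraph $G[C]$ is connected. The node reliability of $G$ is the polynomial \[ \mathrm{nRel}(G;p)=\sum_{C}p^{|C|}(1-p)^{n-|C|}, \] the sum over all connected sets $C$ of $G$. *)

theory Defs
  imports "HOL-Analysis.Analysis"
begin

definition simple_graph :: "'a set \<Rightarrow> ('a \<Rightarrow> 'a \<Rightarrow> bool) \<Rightarrow> bool" where
  "simple_graph V E \<longleftrightarrow> finite V \<and> (\<forall>x y. E x y \<longrightarrow> x \<in> V \<and> y \<in> V)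
     \<and> (\<forall>x y. E x y \<longrightarrow> E y x) \<and> (\<forall>x. \<not> E x x)"

definition induced_connected :: "('a \<Rightarrow> 'a \<Rightarrow> bool) \<Rightarrow> 'a set \<Rightarrow> bool" where
  "induced_connected E C \<longleftrightarrow>
     (\<forall>x\<in>C. \<forall>y\<in>C. (\<lambda>u v. u \<in> C \<and> v \<in> C \<and> E u v)\<^sup>*\<^sup>* x y)"

definition connected_set :: "'a set \<Rightarrow> ('a \<Rightarrow> 'a \<Rightarrow> bool) \<Rightarrow> 'a set \<Rightarrow> bool" where
  "connected_set V E C \<longleftrightarrow> C \<noteq> {} \<and> C \<subseteq> V \<and> induced_connected E C"

definition nRel :: "'a set \<Rightarrow> ('a \<Rightarrow> 'a \<Rightarrow> bool) \<Rightarrow> real \<Rightarrow> real" where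
  "nRel V E p = (\<Sum>C\<in>{C. connected_set V E C}. p ^ card C * (1 - p) ^ (card V - card C))"

end

theory Submission
  imports Defs
begin

text \<open>Every summand of \<open>nRel\<close> is a monomial \<open>p^k (1 - p)^j\<close> with \<open>k \<ge> 1\<close>, whose second
  derivative at \<open>p = 0\<close> is \<open>-2j\<close> for \<open>k = 1\<close>, \<open>2\<close> for \<open>k = 2\<close> and \<open>0\<close> for \<open>k \<ge> 3\<close>.
  The \<open>n\<close> singletons therefore contribute \<open>-2n(n - 1)\<close> and the connected pairs (the edges)
  at most \<open>2 (n choose 2) = n(n - 1)\<close>, so the second derivative is negative at \<open>0\<close> and,
  being a polynomial, stays negative on a neighbourhood of \<open>0\<close>.\<close>

definition bernstein_deriv :: "nat \<Rightarrow> nat \<Rightarrow> real \<Rightarrow> real" where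
  "bernstein_deriv k j p = real k * p^(k-1) * (1-p)^j - real j * p^k * (1-p)^(j-1)"

definition bernstein_deriv2 :: "nat \<Rightarrow> nat \<Rightarrow> real \<Rightarrow> real" where
  "bernstein_deriv2 k j p =
     real k * (real (k-1) * p^(k-2) * (1-p)^j - p^(k-1) * real j * (1-p)^(j-1))
   - real j * (real k * p^(k-1) * (1-p)^(j-1) - p^k * real (j-1) * (1-p)^(j-2))"

lemma has_field_derivative_bernstein:
  "((\<lambda>p. p^k * (1-p)^j) has_field_derivative bernstein_deriv k j p) (at p)"
  unfolding bernstein_deriv_def
  by (auto intro!: derivative_eq_intros simp: algebra_simps)

lemma has_field_derivative_bernstein_deriv:
  "(bernstein_deriv k j has_field_derivative bernstein_deriv2 k j p) (at p)"
  unfolding bernstein_deriv_def[abs_def] bernstein_deriv2_def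
  by (auto intro!: derivative_eq_intros simp: algebra_simps diff_diff_add numeral_2_eq_2)

lemma continuous_on_bernstein_deriv2: "continuous_on UNIV (bernstein_deriv2 k j)"
  unfolding bernstein_deriv2_def by (intro continuous_intros)

lemma bernstein_deriv2_at_0:
  assumes "k > 0"
  shows "bernstein_deriv2 k j 0 = (if k = 1 then - 2 * real j else if k = 2 then 2 else 0)"
proof -
  consider "k = 1" | "k = 2" | "k \<ge> 3" using assms by linarith
  then show ?thesis
    by cases (auto simp: bernstein_deriv2_def numeral_2_eq_2 power_0_left)
qed

lemma deriv2_bernstein_sum:
  "deriv (deriv (\<lambda>p. \<Sum>i\<in>I. p ^ a i * (1-p) ^ b i))
     = (\<lambda>p. \<Sum>i\<in>I. bernstein_deriv2 (a i) (b i) p)"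
proof -
  have "deriv (\<lambda>p. \<Sum>i\<in>I. p ^ a i * (1-p) ^ b i) = (\<lambda>p. \<Sum>i\<in>I. bernstein_deriv (a i) (b i) p)"
    by (intro ext DERIV_imp_deriv DERIV_sum has_field_derivative_bernstein)
  then show ?thesis
    by (auto intro!: ext DERIV_imp_deriv DERIV_sum has_field_derivative_bernstein_deriv)
qed

lemma finite_connected_sets: "finite V \<Longrightarrow> finite {C. connected_set V E C}"
  by (rule finite_subset[of _ "Pow V"]) (auto simp: connected_set_def)

lemma connected_sets_card_1: "{C. connected_set V E C \<and> card C = 1} = (\<lambda>v. {v}) ` V"
  by (auto simp: connected_set_def induced_connected_def card_1_singleton_iff)

lemma card_connected_sets_card_1:
  "card {C. connected_set V E C \<and> card C = 1} = card V"
  unfolding connected_sets_card_1 by (rule card_image) (auto simp: inj_on_def)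

lemma card_connected_sets_card_2:
  assumes "finite V"
  shows "card {C. connected_set V E C \<and> card C = 2} \<le> card V choose 2"
proof -
  have "card {C. connected_set V E C \<and> card C = 2} \<le> card {B. B \<subseteq> V \<and> card B = 2}"
    by (rule card_mono) (auto intro: finite_subset[of _ "Pow V"] simp: assms connected_set_def)
  then show ?thesis by (simp add: n_subsets[OF assms])
qed

lemma deriv2_nRel:
  "deriv (deriv (nRel V E))
     = (\<lambda>p. \<Sum>C\<in>{C. connected_set V E C}. bernstein_deriv2 (card C) (card V - card C) p)"
  unfolding nRel_def[abs_def] by (rule deriv2_bernstein_sum)

lemma deriv2_nRel_at_0:
  assumes "finite V"
  shows "deriv (deriv (nRel V E)) 0
    = 2 * card {C. connected_set V E C \<and> card C = 2} - 2 * (real (card V) - 1) * card V"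
proof -
  define S where "S = {C. connected_set V E C}"
  have count: "(\<Sum>C\<in>S. if card C = k then c else 0) = c * card {C. connected_set V E C \<and> card C = k}"
    for k and c :: real
    using sum.inter_filter[OF finite_connected_sets[OF assms, of E], where g = "\<lambda>_. c" and P = "\<lambda>C. card C = k"]
    by (simp add: S_def mult.commute)
  have "bernstein_deriv2 (card C) (card V - card C) 0
      = (if card C = 2 then 2 else 0) + (if card C = 1 then - 2 * (real (card V) - 1) else 0)"
    if "C \<in> S" for C
  proof -
    from that have "C \<noteq> {}" "C \<subseteq> V" by (auto simp: S_def connected_set_def)
    with assms have "card C > 0" "card C \<le> card V" by (auto simp: card_gt_0_iff finite_subset card_mono)
    then show ?thesis
      by (auto simp: bernstein_deriv2_at_0 of_nat_diff)
  qed
  then have "deriv (deriv (nRel V E)) 0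
      = (\<Sum>C\<in>S. if card C = 2 then 2 else 0) + (\<Sum>C\<in>S. if card C = 1 then - 2 * (real (card V) - 1) else 0)"
    by (simp add: deriv2_nRel S_def[symmetric] sum.distrib)
  then show ?thesis
    using card_connected_sets_card_1[of V E] by (simp add: count algebra_simps)
qed

lemma deriv2_nRel_at_0_neg:
  assumes "finite V" and "card V \<ge> 2"
  shows "deriv (deriv (nRel V E)) 0 < 0"
proof -
  let ?n = "real (card V)"
  have "2 * card {C. connected_set V E C \<and> card C = 2} \<le> 2 * (card V choose 2)"
    using card_connected_sets_card_2[OF assms(1)] by simp
  also have "\<dots> \<le> card V * (card V - 1)"
    by (simp add: choose_two)
  finally have "real (2 * card {C. connected_set V E C \<and> card C = 2}) \<le> real (card V * (card V - 1))"
    by (simp only: of_nat_le_iff)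
  then have "2 * real (card {C. connected_set V E C \<and> card C = 2}) \<le> ?n * (?n - 1)"
    using assms(2) by (simp add: of_nat_diff)
  moreover have "?n * (?n - 1) > 0"
    using assms(2) by simp
  ultimately show ?thesis
    by (simp add: deriv2_nRel_at_0[OF assms(1)] algebra_simps)
qed

theorem lemma3p1:
  fixes V :: "'a set" and E :: "'a \<Rightarrow> 'a \<Rightarrow> bool"
  assumes "simple_graph V E" and "card V \<ge> 2"
  shows "\<exists>\<epsilon>>0. \<forall>p. 0 < p \<and> p < \<epsilon> \<longrightarrow> deriv (deriv (nRel V E)) p < 0"
proof -
  have "finite V" using assms(1) by (simp add: simple_graph_def)
  have "continuous_on UNIV (deriv (deriv (nRel V E)))"
    unfolding deriv2_nRel by (intro continuous_on_sum continuous_on_bernstein_deriv2)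
  then have "deriv (deriv (nRel V E)) \<midarrow>0\<rightarrow> deriv (deriv (nRel V E)) 0"
    by (simp add: continuous_on_eq_continuous_at isCont_def)
  from LIM_fun_less_zero[OF this deriv2_nRel_at_0_neg[OF \<open>finite V\<close> assms(2)]]
  obtain r where "r > 0" "\<And>p. p \<noteq> 0 \<and> \<bar>0 - p\<bar> < r \<Longrightarrow> deriv (deriv (nRel V E)) p < 0"
    by blast
  then show ?thesis by (intro exI[of _ r]) auto
qed

end
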